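(* Let $\Xi$ be a finite measure on $\Delta$, let $\gamma$ be as in the context, and let $\kappa\in[0,\infty)$. The following five conditions are equivalent: (i) $\lim_{x\to\infty}x\gamma''(x)=\kappa$; (ii) $\lim_{x\to\infty}\big(\gamma'(x)-\gamma(x)/x\big)=\kappa$; (iii) there exists a function $L:(0,\infty)\to(0,\infty)$, slowly varying at $\infty$, such that $\gamma(x)/x=\kappa\log x+\log L(x)$ for all $x>0$; (iv) for every $y>0$, $\lim_{x\to\infty}\big(\gamma(yx)/(yx)-\gamma(x)/x\big)=\kappa\log y$; (v) for every $y>0$, $\lim_{x\to\infty}\big(\gamma'(yx)-\gamma'(x)\big)=\kappa\log y$.
   Context: Let $\Delta:=\{u=(u_1,u_2,\ldots):u_1\ge u_2\ge\cdots\ge0,\ \sum_{i\ge1}u_i\le1\}$, and for $u\in\Delta$ write $|u|:=\sum_{i\ge1}u_i$, $(u,u):=\sum_{i\ge1}u_i^2$, and $0:=(0,0,\ldots)$. Let $\Xi$ be a finite measure on $\Delta$, $a:=\Xi(\{0\})$, $\Xi_0:=\Xi-a\delta_0$, and $\nu(\mathrm du):=\Xi_0(\mathrm du)/(u,u)$ on $\Delta\setminus\{0\}$. Define $\gamma:[0,\infty)\to\mathbb R$ by $$\gamma(x):=a\frac{x(x-1)}{2}+\int_\Delta\sum_{i\ge1}\big((1-u_i)^x-1+xu_i\big)\,\nu(\mathrm du),\qquad x\ge0.$$ The function $\gamma$ is infinitely differentiable on $(0,\infty)$. *)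

theory Defs
  imports "HOL-Analysis.Analysis"
begin

text \<open>The simplex Delta of nonincreasing nonnegative sequences with total mass at most 1
  (indices start at 0 instead of 1).\<close>
definition Delta :: "(nat \<Rightarrow> real) set" where
  "Delta = {u. (\<forall>i. u (Suc i) \<le> u i) \<and> (\<forall>i. 0 \<le> u i) \<and> summable u \<and> suminf u \<le> 1}"

definition Delta_sets :: "(nat \<Rightarrow> real) set set" where
  "Delta_sets = sets (restrict_space (Pi\<^sub>M UNIV (\<lambda>_. borel)) Delta)"

definition zero_seq :: "nat \<Rightarrow> real" where
  "zero_seq = (\<lambda>_. 0)"

definition sqnorm :: "(nat \<Rightarrow> real) \<Rightarrow> real" where
  "sqnorm u = (\<Sum>i. (u i)\<^sup>2)"

text \<open>(1-t)^x with the convention 0^0 = 1.\<close>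
definition pow0 :: "real \<Rightarrow> real \<Rightarrow> real" where
  "pow0 b x = (if x = 0 then 1 else b powr x)"

text \<open>gamma(x) = a x(x-1)/2 + int sum_i ((1-u_i)^x - 1 + x u_i) nu(du),
  with a = Xi({0}) and nu(du) = Xi_0(du)/(u,u) on Delta minus {0}.\<close>
definition gamma :: "(nat \<Rightarrow> real) measure \<Rightarrow> real \<Rightarrow> real" where
  "gamma Xi x = measure Xi {zero_seq} * (x * (x - 1) / 2)
     + set_lebesgue_integral Xi (Delta - {zero_seq})
         (\<lambda>u. (\<Sum>i. pow0 (1 - u i) x - 1 + x * u i) / sqnorm u)"

definition slowly_varying :: "(real \<Rightarrow> real) \<Rightarrow> bool" where
  "slowly_varying L \<longleftrightarrow> (\<forall>x>0. 0 < L x) \<and>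
     (\<forall>y>0. ((\<lambda>x. L (y * x) / L x) \<longlongrightarrow> 1) at_top)"

end

theory Submission
  imports Defs
begin

text \<open>
  The second derivative \<open>\<gamma>''(x) = a + \<integral> \<Sum>\<^sub>i (1 - u\<^sub>i)\<^sup>x ln\<^sup>2(1 - u\<^sub>i) \<nu>(du)\<close> is nonnegative and
  nonincreasing, so \<open>x \<gamma>'(x) - \<gamma>(x)\<close> is nondecreasing and \<open>\<gamma>'\<close> is concave. For any such function
  the five conditions are equivalent by real analysis alone: (i) \<open>\<Rightarrow>\<close> (ii) is l'Hospital's rule
  for \<open>(x \<gamma>' - \<gamma>) / x\<close>; (ii) \<open>\<Rightarrow>\<close> (iv) is the mean value theorem for \<open>\<gamma>(x)/x\<close> in the variable
  \<open>ln x\<close>; (iii) \<open>\<Leftrightarrow>\<close> (iv) unfolds slow variation; and the Tauberian directions (iv) \<open>\<Rightarrow>\<close> (ii)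
  and (v) \<open>\<Rightarrow>\<close> (i) follow from the monotonicity, which squeezes the quantity between difference
  quotients over \<open>[x/y, x]\<close> and \<open>[x, y x]\<close> with limits \<open>\<kappa> ln y / (y - 1)\<close> and
  \<open>\<kappa> y ln y / (y - 1)\<close>, both tending to \<open>\<kappa>\<close> as \<open>y \<rightarrow> 1\<close>.

  Differentiating \<open>\<gamma>\<close> twice under the integral sign is justified because each summand and its
  first two \<open>x\<close>-derivatives are \<open>O(u\<^sub>i\<^sup>2)\<close> locally uniformly in \<open>x > 0\<close>; summed over \<open>i\<close> this is
  \<open>O((u, u))\<close>, so after division by \<open>(u, u)\<close> the integrands are bounded and \<open>\<Xi>\<close> is finite.
\<close>

lemma tendsto_shift_diff_zero:
  fixes Q Q' :: "real \<Rightarrow> real"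
  assumes deriv: "\<And>s. (Q has_real_derivative Q' s) (at s)" and lim: "(Q' \<longlongrightarrow> 0) at_top"
  shows "((\<lambda>s. Q (s + c) - Q s) \<longlongrightarrow> 0) at_top"
proof (rule tendstoI)
  fix e :: real assume "e > 0"
  define e' where "e' = e / (\<bar>c\<bar> + 1)"
  have "e' > 0" using \<open>e > 0\<close> by (simp add: e'_def)
  then obtain S where S: "\<And>s. s \<ge> S \<Longrightarrow> \<bar>Q' s\<bar> \<le> e'"
    using tendstoD[OF lim] by (fastforce simp: eventually_at_top_linorder)
  have Lipschitz: "\<bar>Q t - Q s\<bar> \<le> e' * \<bar>t - s\<bar>" if "S \<le> s" "S \<le> t" for s t
    using field_differentiable_bound[of "{S..}" Q Q' e' t s] that S
    by (auto intro: has_field_derivative_at_within deriv)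
  have "\<bar>c\<bar> * e' < e"
    using \<open>e > 0\<close> by (simp add: e'_def field_simps)
  show "\<forall>\<^sub>F s in at_top. dist (Q (s + c) - Q s) 0 < e"
    using eventually_ge_at_top[of "S + \<bar>c\<bar>"]
  proof eventually_elim
    case (elim s)
    then have "\<bar>Q (s + c) - Q s\<bar> \<le> e' * \<bar>c\<bar>"
      using Lipschitz[of s "s + c"] by simp
    then show ?case
      using \<open>\<bar>c\<bar> * e' < e\<close> by (simp add: dist_real_def mult.commute)
  qed
qed

text \<open>In the variable \<open>s = ln x\<close> the dilation \<open>x \<mapsto> y x\<close> becomes the translation \<open>s \<mapsto> s + ln y\<close>.\<close>
lemma tendsto_dilation_diff_ln:
  fixes A A' :: "real \<Rightarrow> real"
  assumes deriv: "\<And>t. t > 0 \<Longrightarrow> (A has_real_derivative A' t) (at t)"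
    and lim: "((\<lambda>t. t * A' t) \<longlongrightarrow> \<kappa>) at_top" and "y > 0"
  shows "((\<lambda>x. A (y * x) - A x) \<longlongrightarrow> \<kappa> * ln y) at_top"
proof -
  define Q where "Q s = A (exp s) - \<kappa> * s" for s
  have "(Q has_real_derivative A' (exp s) * exp s - \<kappa>) (at s)" for s
    unfolding Q_def[abs_def]
    by (intro DERIV_diff DERIV_chain2[OF deriv DERIV_exp] DERIV_cmult_Id) simp
  moreover have "((\<lambda>s. A' (exp s) * exp s - \<kappa>) \<longlongrightarrow> 0) at_top"
    using tendsto_diff[OF filterlim_compose[OF lim exp_at_top] tendsto_const, of \<kappa>]
    by (simp add: mult.commute)
  ultimately have "((\<lambda>s. Q (s + ln y) - Q s) \<longlongrightarrow> 0) at_top"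
    by (rule tendsto_shift_diff_zero)
  then have "((\<lambda>x. Q (ln x + ln y) - Q (ln x)) \<longlongrightarrow> 0) at_top"
    by (rule filterlim_compose[OF _ ln_at_top])
  then have "((\<lambda>x. Q (ln x + ln y) - Q (ln x) + \<kappa> * ln y) \<longlongrightarrow> 0 + \<kappa> * ln y) at_top"
    by (rule tendsto_add[OF _ tendsto_const])
  moreover have "\<forall>\<^sub>F x in at_top. Q (ln x + ln y) - Q (ln x) + \<kappa> * ln y = A (y * x) - A x"
    using eventually_gt_at_top[of 0]
    by eventually_elim (use \<open>y > 0\<close> in \<open>simp add: Q_def exp_add algebra_simps\<close>)
  ultimately show ?thesis
    by (simp add: tendsto_cong)
qed

lemma tendsto_dilation_diff_inverse:
  fixes D :: "real \<Rightarrow> real"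
  assumes "((\<lambda>x. D (y * x) - D x) \<longlongrightarrow> c) at_top" "y > 0"
  shows "((\<lambda>x. D x - D (x / y)) \<longlongrightarrow> c) at_top"
proof -
  have "filterlim (\<lambda>x. inverse y * x) at_top at_top"
    using \<open>y > 0\<close> by (intro filterlim_tendsto_pos_mult_at_top[OF tendsto_const] filterlim_ident) auto
  from filterlim_compose[OF assms(1) this] show ?thesis
    using \<open>y > 0\<close> by (simp add: field_simps)
qed

lemma eventually_greater_of_dilation_lower_bound:
  fixes B :: "real \<Rightarrow> real" and E :: "real \<Rightarrow> real \<Rightarrow> real"
  assumes "0 \<le> \<kappa>" "a < \<kappa>"
    and E: "\<And>y. y > 1 \<Longrightarrow> (E y \<longlongrightarrow> \<kappa> * ln y) at_top"
    and lower: "\<And>y. y > 1 \<Longrightarrow> \<forall>\<^sub>F x in at_top. E y x \<le> (y - 1) * B x"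
  shows "\<forall>\<^sub>F x in at_top. a < B x"
proof -
  have "((\<lambda>y. \<kappa> / y) \<longlongrightarrow> \<kappa>) (at_right 1)"
    by (auto intro!: tendsto_eq_intros)
  from order_tendstoD(1)[OF this \<open>a < \<kappa>\<close>]
  have "\<forall>\<^sub>F y in at_right 1. a < \<kappa> / y \<and> 1 < y"
    using eventually_at_right_less by (rule eventually_conj)
  then obtain y where y: "a < \<kappa> / y" "1 < y"
    using eventually_happens' trivial_limit_at_right_real by blast
  have "1 - 1 / y \<le> ln y"
    using ln_le_minus_one[of "1 / y"] y by (simp add: ln_div)
  then have "\<kappa> * (1 - 1 / y) \<le> \<kappa> * ln y"
    using \<open>0 \<le> \<kappa>\<close> by (rule mult_left_mono)
  moreover have "a * (y - 1) < \<kappa> / y * (y - 1)"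
    using y by (intro mult_strict_right_mono) auto
  ultimately have "a * (y - 1) < \<kappa> * ln y"
    using y by (simp add: diff_divide_distrib right_diff_distrib)
  from order_tendstoD(1)[OF E[OF \<open>1 < y\<close>] this]
  show ?thesis
    using lower[OF \<open>1 < y\<close>]
  proof eventually_elim
    case (elim x)
    then have "(y - 1) * a < (y - 1) * B x"
      by (simp add: mult.commute)
    then show ?case
      using y by simp
  qed
qed

lemma eventually_less_of_dilation_upper_bound:
  fixes B :: "real \<Rightarrow> real" and E :: "real \<Rightarrow> real \<Rightarrow> real"
  assumes "0 \<le> \<kappa>" "\<kappa> < a"
    and E: "\<And>y. y > 1 \<Longrightarrow> (E y \<longlongrightarrow> \<kappa> * ln y) at_top"
    and upper: "\<And>y. y > 1 \<Longrightarrow> \<forall>\<^sub>F x in at_top. (1 - 1 / y) * B x \<le> E y x"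
  shows "\<forall>\<^sub>F x in at_top. B x < a"
proof -
  have "((\<lambda>y. \<kappa> * y) \<longlongrightarrow> \<kappa>) (at_right 1)"
    by (auto intro!: tendsto_eq_intros)
  from order_tendstoD(2)[OF this \<open>\<kappa> < a\<close>]
  have "\<forall>\<^sub>F y in at_right 1. \<kappa> * y < a \<and> 1 < y"
    using eventually_at_right_less by (rule eventually_conj)
  then obtain y where y: "\<kappa> * y < a" "1 < y"
    using eventually_happens' trivial_limit_at_right_real by blast
  have "\<kappa> * ln y \<le> \<kappa> * (y - 1)"
    using ln_le_minus_one[of y] y \<open>0 \<le> \<kappa>\<close> by (intro mult_left_mono) auto
  also have "\<dots> = \<kappa> * y * (1 - 1 / y)"
    using y by (simp add: field_simps)
  also have "\<dots> < a * (1 - 1 / y)"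
    using y by (intro mult_strict_right_mono) auto
  finally have "\<forall>\<^sub>F x in at_top. E y x < a * (1 - 1 / y)"
    by (rule order_tendstoD(2)[OF E[OF \<open>1 < y\<close>]])
  then show ?thesis
    using upper[OF \<open>1 < y\<close>]
  proof eventually_elim
    case (elim x)
    then have "(1 - 1 / y) * B x < (1 - 1 / y) * a"
      by (simp add: mult.commute)
    then show ?case
      using y by simp
  qed
qed

text \<open>By \<open>1 - 1/y \<le> ln y \<le> y - 1\<close>, the hypotheses confine the limit points of \<open>B\<close> to
  \<open>[\<kappa>/y, \<kappa> y]\<close> for every \<open>y > 1\<close>.\<close>
lemma tendsto_of_dilation_sandwich:
  fixes B :: "real \<Rightarrow> real" and E E' :: "real \<Rightarrow> real \<Rightarrow> real"
  assumes "0 \<le> \<kappa>"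
    and "\<And>y. y > 1 \<Longrightarrow> (E y \<longlongrightarrow> \<kappa> * ln y) at_top"
    and "\<And>y. y > 1 \<Longrightarrow> (E' y \<longlongrightarrow> \<kappa> * ln y) at_top"
    and "\<And>y. y > 1 \<Longrightarrow> \<forall>\<^sub>F x in at_top. E y x \<le> (y - 1) * B x"
    and "\<And>y. y > 1 \<Longrightarrow> \<forall>\<^sub>F x in at_top. (1 - 1 / y) * B x \<le> E' y x"
  shows "(B \<longlongrightarrow> \<kappa>) at_top"
  using eventually_greater_of_dilation_lower_bound[OF assms(1) _ assms(2,4)]
    eventually_less_of_dilation_upper_bound[OF assms(1) _ assms(3,5)]
  by (rule order_tendstoI)

lemma slowly_varying_representation_iff:
  fixes h :: "real \<Rightarrow> real"
  shows "(\<exists>L. slowly_varying L \<and> (\<forall>x>0. h x = \<kappa> * ln x + ln (L x)))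
     \<longleftrightarrow> (\<forall>y>0. ((\<lambda>x. h (y * x) - h x) \<longlongrightarrow> \<kappa> * ln y) at_top)"
proof
  assume "\<exists>L. slowly_varying L \<and> (\<forall>x>0. h x = \<kappa> * ln x + ln (L x))"
  then obtain L where L: "\<And>x. x > 0 \<Longrightarrow> L x > 0" "\<And>x. x > 0 \<Longrightarrow> h x = \<kappa> * ln x + ln (L x)"
    and ratio: "\<And>y. y > 0 \<Longrightarrow> ((\<lambda>x. L (y * x) / L x) \<longlongrightarrow> 1) at_top"
    by (auto simp: slowly_varying_def)
  show "\<forall>y>0. ((\<lambda>x. h (y * x) - h x) \<longlongrightarrow> \<kappa> * ln y) at_top"
  proof (intro allI impI)
    fix y :: real assume "y > 0"
    have "((\<lambda>x. \<kappa> * ln y + ln (L (y * x) / L x)) \<longlongrightarrow> \<kappa> * ln y + ln 1) at_top"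
      by (intro tendsto_intros ratio \<open>y > 0\<close>) auto
    moreover have "\<forall>\<^sub>F x in at_top. \<kappa> * ln y + ln (L (y * x) / L x) = h (y * x) - h x"
      using eventually_gt_at_top[of 0]
    proof eventually_elim
      case (elim x)
      then have "L (y * x) > 0" "L x > 0"
        using L(1) \<open>y > 0\<close> by simp_all
      then show ?case
        using elim \<open>y > 0\<close> L(2)[of x] L(2)[of "y * x"] by (simp add: ln_div ln_mult algebra_simps)
    qed
    ultimately show "((\<lambda>x. h (y * x) - h x) \<longlongrightarrow> \<kappa> * ln y) at_top"
      by (simp add: tendsto_cong)
  qed
next
  assume dilation: "\<forall>y>0. ((\<lambda>x. h (y * x) - h x) \<longlongrightarrow> \<kappa> * ln y) at_top"
  define L where "L x = exp (h x - \<kappa> * ln x)" for x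
  have "((\<lambda>x. L (y * x) / L x) \<longlongrightarrow> 1) at_top" if "y > 0" for y
  proof -
    have "((\<lambda>x. exp (h (y * x) - h x - \<kappa> * ln y)) \<longlongrightarrow> exp (\<kappa> * ln y - \<kappa> * ln y)) at_top"
      using dilation that by (intro tendsto_intros) auto
    moreover have "\<forall>\<^sub>F x in at_top. exp (h (y * x) - h x - \<kappa> * ln y) = L (y * x) / L x"
      using eventually_gt_at_top[of 0]
      by eventually_elim (use that in \<open>simp add: L_def ln_mult exp_diff[symmetric] algebra_simps\<close>)
    ultimately show ?thesis
      by (simp add: tendsto_cong)
  qed
  then have "slowly_varying L"
    by (simp add: slowly_varying_def L_def)
  then show "\<exists>L. slowly_varying L \<and> (\<forall>x>0. h x = \<kappa> * ln x + ln (L x))"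
    by (intro exI[of _ L]) (simp add: L_def)
qed

locale convex_with_antitone_second_derivative =
  fixes g g' g'' :: "real \<Rightarrow> real"
  assumes has_deriv: "x > 0 \<Longrightarrow> (g has_real_derivative g' x) (at x)"
    and has_deriv': "x > 0 \<Longrightarrow> (g' has_real_derivative g'' x) (at x)"
    and second_deriv_nonneg: "x > 0 \<Longrightarrow> 0 \<le> g'' x"
    and second_deriv_antimono: "0 < x \<Longrightarrow> x \<le> y \<Longrightarrow> g'' y \<le> g'' x"
begin

lemma deriv_eq: "x > 0 \<Longrightarrow> deriv g x = g' x"
  by (rule DERIV_imp_deriv[OF has_deriv])

lemma deriv_deriv_eq: "x > 0 \<Longrightarrow> deriv (deriv g) x = g'' x"
  by (rule DERIV_imp_deriv, rule has_field_derivative_transform_within_open[OF has_deriv', of _ "{0<..}"])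
    (auto simp: deriv_eq)

lemma has_deriv_quotient:
  "x > 0 \<Longrightarrow> ((\<lambda>t. g t / t) has_real_derivative (g' x - g x / x) / x) (at x)"
  by (rule derivative_eq_intros has_deriv refl | simp add: field_simps power2_eq_square)+

text \<open>\<open>x g'(x) - g(x)\<close> is minus the intercept of the tangent at \<open>x\<close>; its derivative is \<open>x g''(x)\<close>.\<close>
lemma mono_tangent_intercept:
  assumes "0 < a" "a \<le> b"
  shows "a * g' a - g a \<le> b * g' b - g b"
proof (rule DERIV_nonneg_imp_nondecreasing[OF \<open>a \<le> b\<close>])
  fix t assume "a \<le> t" "t \<le> b"
  then have "t > 0"
    using \<open>0 < a\<close> by simp
  have "((\<lambda>t. t * g' t - g t) has_real_derivative 1 * g' t + g'' t * t - g' t) (at t)"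
    by (intro DERIV_diff DERIV_mult DERIV_ident has_deriv has_deriv' \<open>t > 0\<close>)
  then show "\<exists>y. ((\<lambda>t. t * g' t - g t) has_real_derivative y) (at t) \<and> 0 \<le> y"
    using second_deriv_nonneg[OF \<open>t > 0\<close>] \<open>t > 0\<close> by auto
qed

text \<open>Since \<open>(g t / t)' = (t g'(t) - g(t)) / t\<^sup>2\<close> and the numerator is nondecreasing, comparing it with
  its value at \<open>x\<close> makes \<open>g t / t + (x g'(x) - g(x)) / t\<close> monotone on each side of \<open>x\<close>.\<close>
lemma quotient_dilation_bounds:
  assumes "y > 1" "x > 0"
  shows "g x / x - g (x / y) / (x / y) \<le> (y - 1) * (g' x - g x / x)"
    and "(1 - 1 / y) * (g' x - g x / x) \<le> g (y * x) / (y * x) - g x / x"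
proof -
  define \<phi> where "\<phi> = g' x - g x / x"
  have x_\<phi>: "x * \<phi> = x * g' x - g x"
    using \<open>x > 0\<close> by (simp add: \<phi>_def field_simps)
  define F where "F t = g t / t + x * \<phi> / t" for t
  have F_deriv: "(F has_real_derivative ((t * g' t - g t) - x * \<phi>) / t\<^sup>2) (at t)" if "t > 0" for t
    unfolding F_def[abs_def]
    by (rule derivative_eq_intros has_deriv_quotient that refl | use that in \<open>simp add: field_simps power2_eq_square\<close>)+
  have "F x \<le> F (x / y)"
  proof (rule deriv_nonpos_imp_antimono[of "x / y" x F])
    fix t assume "t \<in> {x / y..x}"
    then have "t > 0" "t \<le> x"
      using assms less_le_trans[of 0 "x / y" t] by auto
    then show "(F has_real_derivative ((t * g' t - g t) - x * \<phi>) / t\<^sup>2) (at t)"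
      "((t * g' t - g t) - x * \<phi>) / t\<^sup>2 \<le> 0"
      using F_deriv[of t] mono_tangent_intercept[of t x] by (auto simp: x_\<phi> intro!: divide_nonpos_pos)
  qed (use assms in \<open>simp add: divide_le_eq\<close>)
  moreover have "F x = g x / x + \<phi>" "F (x / y) = g (x / y) / (x / y) + y * \<phi>"
    using assms by (simp_all add: F_def)
  ultimately show "g x / x - g (x / y) / (x / y) \<le> (y - 1) * (g' x - g x / x)"
    by (simp add: \<phi>_def[symmetric] left_diff_distrib)
  have "F x \<le> F (y * x)"
  proof (rule deriv_nonneg_imp_mono[of x "y * x" F])
    fix t assume "t \<in> {x..y * x}"
    then have "t > 0" "x \<le> t"
      using assms by auto
    then show "(F has_real_derivative ((t * g' t - g t) - x * \<phi>) / t\<^sup>2) (at t)"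
      "0 \<le> ((t * g' t - g t) - x * \<phi>) / t\<^sup>2"
      using F_deriv[of t] mono_tangent_intercept[of x t] assms by (auto simp: x_\<phi> intro!: divide_nonneg_pos)
  qed (use assms in simp)
  moreover have "F (y * x) = g (y * x) / (y * x) + \<phi> / y"
    using assms by (simp add: F_def)
  ultimately show "(1 - 1 / y) * (g' x - g x / x) \<le> g (y * x) / (y * x) - g x / x"
    using \<open>F x = g x / x + \<phi>\<close> by (simp add: \<phi>_def[symmetric] left_diff_distrib)
qed

lemma deriv_dilation_bounds:
  assumes "y > 1" "x > 0"
  shows "g' (y * x) - g' x \<le> (y - 1) * (x * g'' x)"
    and "(1 - 1 / y) * (x * g'' x) \<le> g' x - g' (x / y)"
proof -
  define G where "G t = g' t - g'' x * t" for t
  have G_deriv: "(G has_real_derivative g'' t - g'' x) (at t)" if "t > 0" for t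
    unfolding G_def[abs_def] by (intro DERIV_diff has_deriv' that DERIV_cmult_Id)
  have "G (y * x) \<le> G x"
  proof (rule deriv_nonpos_imp_antimono[of x "y * x" G])
    fix t assume "t \<in> {x..y * x}"
    then show "(G has_real_derivative g'' t - g'' x) (at t)" "g'' t - g'' x \<le> 0"
      using assms second_deriv_antimono[of x t] by (auto intro: G_deriv)
  qed (use assms in simp)
  then show "g' (y * x) - g' x \<le> (y - 1) * (x * g'' x)"
    by (simp add: G_def algebra_simps)
  have "G (x / y) \<le> G x"
  proof (rule deriv_nonneg_imp_mono[of "x / y" x G])
    fix t assume "t \<in> {x / y..x}"
    then have "t > 0" "t \<le> x"
      using assms less_le_trans[of 0 "x / y" t] by auto
    then show "(G has_real_derivative g'' t - g'' x) (at t)" "0 \<le> g'' t - g'' x"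
      using second_deriv_antimono[of t x] by (auto intro: G_deriv)
  qed (use assms in \<open>simp add: divide_le_eq\<close>)
  then show "(1 - 1 / y) * (x * g'' x) \<le> g' x - g' (x / y)"
    using assms by (simp add: G_def field_simps)
qed

lemma quotient_deriv_tendsto_if_x_second_deriv_tendsto:
  assumes "((\<lambda>x. x * g'' x) \<longlongrightarrow> \<kappa>) at_top"
  shows "((\<lambda>x. g' x - g x / x) \<longlongrightarrow> \<kappa>) at_top"
proof -
  have "((\<lambda>x. (x * g' x - g x) / x) \<longlongrightarrow> \<kappa>) at_top"
  proof (rule lhospital_at_top_at_top[where g' = "\<lambda>_. 1" and f' = "\<lambda>x. x * g'' x"])
    show "\<forall>\<^sub>F x in at_top. ((\<lambda>x. x * g' x - g x) has_real_derivative x * g'' x) (at x)"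
      using eventually_gt_at_top[of 0]
    proof eventually_elim
      case (elim x)
      have "((\<lambda>x. x * g' x - g x) has_real_derivative 1 * g' x + g'' x * x - g' x) (at x)"
        by (intro DERIV_diff DERIV_mult DERIV_ident has_deriv has_deriv' elim)
      then show ?case
        by (simp add: mult.commute)
    qed
  qed (use assms in \<open>auto intro: filterlim_ident\<close>)
  moreover have "\<forall>\<^sub>F x in at_top. (x * g' x - g x) / x = g' x - g x / x"
    using eventually_gt_at_top[of 0] by eventually_elim (simp add: field_simps)
  ultimately show ?thesis
    by (simp add: tendsto_cong)
qed

lemma quotient_dilation_if_quotient_deriv_tendsto:
  assumes "((\<lambda>x. g' x - g x / x) \<longlongrightarrow> \<kappa>) at_top" "y > 0"
  shows "((\<lambda>x. g (y * x) / (y * x) - g x / x) \<longlongrightarrow> \<kappa> * ln y) at_top"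
proof (rule tendsto_dilation_diff_ln[OF has_deriv_quotient _ \<open>y > 0\<close>])
  have "\<forall>\<^sub>F x in at_top. g' x - g x / x = x * ((g' x - g x / x) / x)"
    using eventually_gt_at_top[of 0] by eventually_elim simp
  then show "((\<lambda>x. x * ((g' x - g x / x) / x)) \<longlongrightarrow> \<kappa>) at_top"
    using assms(1) by (simp add: tendsto_cong)
qed

lemma deriv_dilation_if_quotient_deriv_tendsto:
  assumes "((\<lambda>x. g' x - g x / x) \<longlongrightarrow> \<kappa>) at_top" "y > 0"
  shows "((\<lambda>x. g' (y * x) - g' x) \<longlongrightarrow> \<kappa> * ln y) at_top"
proof -
  have "((\<lambda>x. (g' (y * x) - g (y * x) / (y * x)) - (g' x - g x / x)) \<longlongrightarrow> \<kappa> - \<kappa>) at_top"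
    using filterlim_compose[OF assms(1) filterlim_tendsto_pos_mult_at_top[OF tendsto_const \<open>y > 0\<close> filterlim_ident]]
    by (intro tendsto_diff assms(1))
  from tendsto_add[OF this quotient_dilation_if_quotient_deriv_tendsto[OF assms]]
  show ?thesis
    by simp
qed

lemma quotient_deriv_tendsto_if_quotient_dilation:
  assumes "0 \<le> \<kappa>" and dilation: "\<And>y. y > 0 \<Longrightarrow> ((\<lambda>x. g (y * x) / (y * x) - g x / x) \<longlongrightarrow> \<kappa> * ln y) at_top"
  shows "((\<lambda>x. g' x - g x / x) \<longlongrightarrow> \<kappa>) at_top"
proof (rule tendsto_of_dilation_sandwich[OF \<open>0 \<le> \<kappa>\<close> tendsto_dilation_diff_inverse[OF dilation] dilation])
  fix y :: real assume "y > 1"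
  show "\<forall>\<^sub>F x in at_top. g x / x - g (x / y) / (x / y) \<le> (y - 1) * (g' x - g x / x)"
    using eventually_gt_at_top[of 0] by eventually_elim (rule quotient_dilation_bounds(1)[OF \<open>y > 1\<close>])
  show "\<forall>\<^sub>F x in at_top. (1 - 1 / y) * (g' x - g x / x) \<le> g (y * x) / (y * x) - g x / x"
    using eventually_gt_at_top[of 0] by eventually_elim (rule quotient_dilation_bounds(2)[OF \<open>y > 1\<close>])
qed auto

lemma x_second_deriv_tendsto_if_deriv_dilation:
  assumes "0 \<le> \<kappa>" and dilation: "\<And>y. y > 0 \<Longrightarrow> ((\<lambda>x. g' (y * x) - g' x) \<longlongrightarrow> \<kappa> * ln y) at_top"
  shows "((\<lambda>x. x * g'' x) \<longlongrightarrow> \<kappa>) at_top"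
proof (rule tendsto_of_dilation_sandwich[OF \<open>0 \<le> \<kappa>\<close> dilation tendsto_dilation_diff_inverse[OF dilation]])
  fix y :: real assume "y > 1"
  show "\<forall>\<^sub>F x in at_top. g' (y * x) - g' x \<le> (y - 1) * (x * g'' x)"
    using eventually_gt_at_top[of 0] by eventually_elim (rule deriv_dilation_bounds(1)[OF \<open>y > 1\<close>])
  show "\<forall>\<^sub>F x in at_top. (1 - 1 / y) * (x * g'' x) \<le> g' x - g' (x / y)"
    using eventually_gt_at_top[of 0] by eventually_elim (rule deriv_dilation_bounds(2)[OF \<open>y > 1\<close>])
qed auto

theorem limit_conditions_equivalent:
  assumes "0 \<le> \<kappa>"
  shows "(((\<lambda>x. x * g'' x) \<longlongrightarrow> \<kappa>) at_top
           \<longleftrightarrow> ((\<lambda>x. g' x - g x / x) \<longlongrightarrow> \<kappa>) at_top)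
       \<and> (((\<lambda>x. g' x - g x / x) \<longlongrightarrow> \<kappa>) at_top
           \<longleftrightarrow> (\<exists>L. slowly_varying L \<and> (\<forall>x>0. g x / x = \<kappa> * ln x + ln (L x))))
       \<and> ((\<exists>L. slowly_varying L \<and> (\<forall>x>0. g x / x = \<kappa> * ln x + ln (L x)))
           \<longleftrightarrow> (\<forall>y>0. ((\<lambda>x. g (y * x) / (y * x) - g x / x) \<longlongrightarrow> \<kappa> * ln y) at_top))
       \<and> ((\<forall>y>0. ((\<lambda>x. g (y * x) / (y * x) - g x / x) \<longlongrightarrow> \<kappa> * ln y) at_top)
           \<longleftrightarrow> (\<forall>y>0. ((\<lambda>x. g' (y * x) - g' x) \<longlongrightarrow> \<kappa> * ln y) at_top))"
  using quotient_deriv_tendsto_if_x_second_deriv_tendsto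
    quotient_dilation_if_quotient_deriv_tendsto deriv_dilation_if_quotient_deriv_tendsto
    quotient_deriv_tendsto_if_quotient_dilation[OF assms]
    x_second_deriv_tendsto_if_deriv_dilation[OF assms]
    slowly_varying_representation_iff[of "\<lambda>x. g x / x" \<kappa>]
  by blast

corollary limit_conditions_equivalent_deriv:
  assumes "0 \<le> \<kappa>"
  shows "(((\<lambda>x. x * deriv (deriv g) x) \<longlongrightarrow> \<kappa>) at_top
           \<longleftrightarrow> ((\<lambda>x. deriv g x - g x / x) \<longlongrightarrow> \<kappa>) at_top)
       \<and> (((\<lambda>x. deriv g x - g x / x) \<longlongrightarrow> \<kappa>) at_top
           \<longleftrightarrow> (\<exists>L. slowly_varying L \<and> (\<forall>x>0. g x / x = \<kappa> * ln x + ln (L x))))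
       \<and> ((\<exists>L. slowly_varying L \<and> (\<forall>x>0. g x / x = \<kappa> * ln x + ln (L x)))
           \<longleftrightarrow> (\<forall>y>0. ((\<lambda>x. g (y * x) / (y * x) - g x / x) \<longlongrightarrow> \<kappa> * ln y) at_top))
       \<and> ((\<forall>y>0. ((\<lambda>x. g (y * x) / (y * x) - g x / x) \<longlongrightarrow> \<kappa> * ln y) at_top)
           \<longleftrightarrow> (\<forall>y>0. ((\<lambda>x. deriv g (y * x) - deriv g x) \<longlongrightarrow> \<kappa> * ln y) at_top))"
proof -
  have cong: "(f \<longlongrightarrow> l) at_top \<longleftrightarrow> (f' \<longlongrightarrow> l) at_top"
    if "\<And>x. x > 0 \<Longrightarrow> f x = f' x" for f f' :: "real \<Rightarrow> real" and l
    by (rule tendsto_cong) (use eventually_gt_at_top[of 0] in \<open>eventually_elim, simp add: that\<close>)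
  have "((\<lambda>x. x * deriv (deriv g) x) \<longlongrightarrow> \<kappa>) at_top \<longleftrightarrow> ((\<lambda>x. x * g'' x) \<longlongrightarrow> \<kappa>) at_top"
    "((\<lambda>x. deriv g x - g x / x) \<longlongrightarrow> \<kappa>) at_top \<longleftrightarrow> ((\<lambda>x. g' x - g x / x) \<longlongrightarrow> \<kappa>) at_top"
    "\<And>y. y > 0 \<Longrightarrow> ((\<lambda>x. deriv g (y * x) - deriv g x) \<longlongrightarrow> \<kappa> * ln y) at_top
       \<longleftrightarrow> ((\<lambda>x. g' (y * x) - g' x) \<longlongrightarrow> \<kappa> * ln y) at_top"
    by (intro cong; simp add: deriv_eq deriv_deriv_eq)+
  with limit_conditions_equivalent[OF assms] show ?thesis
    by simp
qed

end

definition psi :: "real \<Rightarrow> real \<Rightarrow> real" where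
  "psi v x = pow0 (1 - v) x - 1 + x * v"

definition psi' :: "real \<Rightarrow> real \<Rightarrow> real" where
  "psi' v x = (1 - v) powr x * ln (1 - v) + v"

definition psi'' :: "real \<Rightarrow> real \<Rightarrow> real" where
  "psi'' v x = (1 - v) powr x * (ln (1 - v))\<^sup>2"

definition sq_bounded_on :: "(real \<Rightarrow> real \<Rightarrow> real) \<Rightarrow> real set \<Rightarrow> bool" where
  "sq_bounded_on f Y \<longleftrightarrow> (\<exists>K\<ge>0. \<forall>v\<in>{0..1}. \<forall>y\<in>Y. \<bar>f v y\<bar> \<le> K * v\<^sup>2)"

lemma sq_bounded_on_subset: "sq_bounded_on f Y \<Longrightarrow> Z \<subseteq> Y \<Longrightarrow> sq_bounded_on f Z"
  unfolding sq_bounded_on_def by blast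

lemma has_real_derivative_psi:
  assumes "v \<le> 1" "x > 0"
  shows "(psi v has_real_derivative psi' v x) (at x)"
proof (rule has_field_derivative_transform_within_open[where S = "{0<..}"])
  show "((\<lambda>x. (1 - v) powr x - 1 + x * v) has_real_derivative psi' v x) (at x)"
    unfolding psi'_def by (auto intro!: derivative_eq_intros)
qed (use assms in \<open>auto simp: psi_def pow0_def\<close>)

lemma has_real_derivative_psi': "(psi' v has_real_derivative psi'' v x) (at x)"
  unfolding psi'_def[abs_def] psi''_def
  by (auto intro!: derivative_eq_intros simp: power2_eq_square)

lemma powr_mult_abs_ln_power_le:
  fixes t y :: real
  assumes "0 \<le> t" "t \<le> 1" "0 < y" "0 < n"
  shows "t powr y * \<bar>ln t\<bar> ^ n \<le> (n / y) ^ n"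
proof (cases "t = 0")
  case False
  define s where "s = - y * ln t"
  have "ln t \<le> 0"
    using assms False by simp
  then have "0 \<le> s" "\<bar>ln t\<bar> = s / y" "t powr y = exp (- s)"
    using assms False by (simp_all add: s_def mult_nonneg_nonpos powr_def)
  have "s / n \<le> exp (s / n)"
    using exp_ge_add_one_self[of "s / n"] by linarith
  then have "(s / n) ^ n \<le> exp (s / n) ^ n"
    using \<open>0 \<le> s\<close> by (intro power_mono) auto
  also have "\<dots> = exp s"
    using \<open>0 < n\<close> by (simp add: exp_of_nat_mult[symmetric])
  finally have "s ^ n / exp s \<le> n ^ n"
    using \<open>0 < n\<close> by (simp add: power_divide pos_divide_le_eq mult.commute)
  have "t powr y * \<bar>ln t\<bar> ^ n = exp (- s) * (s / y) ^ n"
    by (simp only: \<open>\<bar>ln t\<bar> = s / y\<close> \<open>t powr y = exp (- s)\<close>)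
  also have "\<dots> = s ^ n / exp s / y ^ n"
    by (simp add: exp_minus power_divide field_simps)
  also have "\<dots> \<le> n ^ n / y ^ n"
    using \<open>s ^ n / exp s \<le> n ^ n\<close> assms by (intro divide_right_mono) auto
  finally show ?thesis
    by (simp add: power_divide)
qed (use assms in simp)

lemma ln_one_minus_bounds:
  fixes v :: real
  assumes "0 \<le> v" "v \<le> 1 / 2"
  shows "- v - 2 * v\<^sup>2 \<le> ln (1 - v)" "ln (1 - v) \<le> - v" "\<bar>ln (1 - v)\<bar> \<le> 2 * v"
proof -
  show "- v - 2 * v\<^sup>2 \<le> ln (1 - v)"
    using assms by (rule ln_one_minus_pos_lower_bound)
  show "ln (1 - v) \<le> - v"
    using assms by (intro ln_one_minus_pos_upper_bound) auto
  moreover have "2 * v\<^sup>2 \<le> v"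
    using mult_right_mono[of "2 * v" 1 v] assms by (simp add: power2_eq_square)
  ultimately show "\<bar>ln (1 - v)\<bar> \<le> 2 * v"
    using \<open>- v - 2 * v\<^sup>2 \<le> ln (1 - v)\<close> by linarith
qed

lemma sq_bounded_on_psi'':
  assumes "0 < x0"
  shows "sq_bounded_on psi'' {x0..x1}"
  unfolding sq_bounded_on_def
proof (intro exI[of _ "4 + 16 / x0\<^sup>2"] conjI ballI)
  fix v y :: real assume "v \<in> {0..1}" "y \<in> {x0..x1}"
  then have v: "0 \<le> v" "v \<le> 1" and "x0 \<le> y"
    by auto
  have "(1 - v) powr y \<le> 1"
    using v assms \<open>x0 \<le> y\<close> by (intro powr_le1) auto
  have small: "psi'' v y \<le> 4 * v\<^sup>2" if "v \<le> 1 / 2"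
  proof -
    have "\<bar>ln (1 - v)\<bar>\<^sup>2 \<le> (2 * v)\<^sup>2"
      using ln_one_minus_bounds(3)[OF v(1) that] by (rule power_mono) simp
    then have "(ln (1 - v))\<^sup>2 \<le> (2 * v)\<^sup>2"
      by simp
    then have "psi'' v y \<le> 1 * (2 * v)\<^sup>2"
      unfolding psi''_def using \<open>(1 - v) powr y \<le> 1\<close> by (intro mult_mono) auto
    then show ?thesis
      by (simp add: power_mult_distrib)
  qed
  have large: "psi'' v y \<le> 16 / x0\<^sup>2 * v\<^sup>2" if "1 / 2 < v"
  proof -
    have "(1 - v) powr y * \<bar>ln (1 - v)\<bar> ^ 2 \<le> (real 2 / y) ^ 2"
      using v \<open>x0 \<le> y\<close> assms by (intro powr_mult_abs_ln_power_le) auto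
    then have "psi'' v y \<le> (2 / y)\<^sup>2"
      by (simp add: psi''_def)
    also have "\<dots> \<le> (2 / x0)\<^sup>2"
      using assms \<open>x0 \<le> y\<close> by (intro power_mono) (auto simp: frac_le)
    also have "\<dots> = 4 / x0\<^sup>2 * 1"
      by (simp add: power_divide)
    also have "\<dots> \<le> 4 / x0\<^sup>2 * (4 * v\<^sup>2)"
      using power_mono[of "1 / 2" v 2] that by (intro mult_left_mono) (auto simp: power_divide)
    finally show ?thesis
      by simp
  qed
  have "0 \<le> 16 / x0\<^sup>2 * v\<^sup>2" "0 \<le> 4 * v\<^sup>2"
    by simp_all
  then have "psi'' v y \<le> 4 * v\<^sup>2 + 16 / x0\<^sup>2 * v\<^sup>2"
    using small large by (cases "v \<le> 1 / 2") linarith+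
  then show "\<bar>psi'' v y\<bar> \<le> (4 + 16 / x0\<^sup>2) * v\<^sup>2"
    by (simp add: psi''_def distrib_right)
qed (use assms in simp)

lemma sq_bounded_on_psi'_at_1: "sq_bounded_on psi' {1}"
  unfolding sq_bounded_on_def
proof (intro exI[of _ 8] conjI ballI)
  fix v y :: real assume "v \<in> {0..1}" "y \<in> {1}"
  then have v: "0 \<le> v" "v \<le> 1" and "psi' v y = (1 - v) * ln (1 - v) + v"
    by (auto simp: psi'_def)
  consider "v \<le> 1 / 2" | "1 / 2 < v"
    by linarith
  then show "\<bar>psi' v y\<bar> \<le> 8 * v\<^sup>2"
  proof cases
    case 1
    note ln_bounds = ln_one_minus_bounds[OF v(1) 1]
    have "(1 - v) * ln (1 - v) \<le> (1 - v) * - v"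
      using ln_bounds v by (intro mult_left_mono) auto
    moreover have "(1 - v) * (- v - 2 * v\<^sup>2) \<le> (1 - v) * ln (1 - v)"
      using ln_bounds v by (intro mult_left_mono) auto
    moreover have "0 \<le> v ^ 3"
      using v by simp
    ultimately have "\<bar>psi' v y\<bar> \<le> v\<^sup>2"
      using \<open>psi' v y = _\<close> by (simp add: abs_le_iff algebra_simps power2_eq_square power3_eq_cube)
    then show ?thesis
      by simp
  next
    case 2
    have "\<bar>(1 - v) * ln (1 - v)\<bar> \<le> 1"
      using powr_mult_abs_ln_power_le[of "1 - v" 1 1] v by (simp add: abs_mult)
    then have "\<bar>psi' v y\<bar> \<le> 2"
      using \<open>psi' v y = _\<close> v by linarith
    also have "\<dots> \<le> 8 * v\<^sup>2"
      using 2 power_mono[of "1 / 2" v 2] by (simp add: power_divide)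
    finally show ?thesis .
  qed
qed simp

lemma sq_bounded_on_integrate:
  assumes "a \<le> r" "r \<le> b"
    and deriv: "\<And>v y. 0 \<le> v \<Longrightarrow> v \<le> 1 \<Longrightarrow> y \<in> {a..b} \<Longrightarrow> (f v has_real_derivative f' v y) (at y)"
    and "sq_bounded_on f' {a..b}" "sq_bounded_on f {r}"
  shows "sq_bounded_on f {a..b}"
proof -
  obtain K' K0 where "K' \<ge> 0" "K0 \<ge> 0"
    and K': "\<And>v y. v \<in> {0..1} \<Longrightarrow> y \<in> {a..b} \<Longrightarrow> \<bar>f' v y\<bar> \<le> K' * v\<^sup>2"
    and K0: "\<And>v. v \<in> {0..1} \<Longrightarrow> \<bar>f v r\<bar> \<le> K0 * v\<^sup>2"
    using assms(4,5) unfolding sq_bounded_on_def by auto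
  have "\<bar>f v y\<bar> \<le> (K0 + K' * (b - a)) * v\<^sup>2" if "v \<in> {0..1}" "y \<in> {a..b}" for v y
  proof -
    have "norm (f v y - f v r) \<le> K' * v\<^sup>2 * norm (y - r)"
    proof (rule field_differentiable_bound[of "{a..b}"])
      fix z :: real assume "z \<in> {a..b}"
      then show "(f v has_field_derivative f' v z) (at z within {a..b})" "norm (f' v z) \<le> K' * v\<^sup>2"
        using that by (auto intro: has_field_derivative_at_within[OF deriv] K')
    qed (use that assms(1,2) in auto)
    then have "\<bar>f v y - f v r\<bar> \<le> K' * v\<^sup>2 * \<bar>y - r\<bar>"
      by simp
    also have "\<dots> \<le> K' * v\<^sup>2 * (b - a)"
      using that assms(1,2) \<open>K' \<ge> 0\<close> by (intro mult_left_mono) auto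
    finally show ?thesis
      using K0[OF that(1)] by (simp add: algebra_simps)
  qed
  then show ?thesis
    unfolding sq_bounded_on_def using \<open>K' \<ge> 0\<close> \<open>K0 \<ge> 0\<close> assms(1,2)
    by (intro exI[of _ "K0 + K' * (b - a)"]) auto
qed

lemma sq_bounded_on_psi':
  assumes "0 < a"
  shows "sq_bounded_on psi' {a..b}"
proof (rule sq_bounded_on_subset)
  show "sq_bounded_on psi' {min a 1..max b 1}"
  proof (rule sq_bounded_on_integrate[where r = 1])
    show "sq_bounded_on psi'' {min a 1..max b 1}"
      using assms by (intro sq_bounded_on_psi'') simp
  qed (auto intro: has_real_derivative_psi' sq_bounded_on_psi'_at_1)
qed auto

lemma sq_bounded_on_psi:
  assumes "0 < a"
  shows "sq_bounded_on psi {a..b}"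
proof (rule sq_bounded_on_subset)
  have "sq_bounded_on psi {1}"
    by (auto simp: sq_bounded_on_def psi_def pow0_def)
  then show "sq_bounded_on psi {min a 1..max b 1}"
    using assms
    by (intro sq_bounded_on_integrate[where r = 1, OF _ _ has_real_derivative_psi sq_bounded_on_psi']) auto
qed auto

lemma Delta_bounds:
  assumes "u \<in> Delta"
  shows "0 \<le> u i" "u i \<le> 1" "summable (\<lambda>i. (u i)\<^sup>2)"
proof -
  have u: "\<And>i. 0 \<le> u i" "summable u" "suminf u \<le> 1"
    using assms by (auto simp: Delta_def)
  have "sum u {i} \<le> suminf u" for i
    using u by (intro sum_le_suminf) auto
  then have le1: "u i \<le> 1" for i
    using u(3) order_trans by simp blast
  show "0 \<le> u i" "u i \<le> 1"
    using u(1) le1 by auto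
  show "summable (\<lambda>i. (u i)\<^sup>2)"
    using u(1) le1 by (intro summable_comparison_test[OF _ u(2)])
      (auto simp: power2_eq_square mult_left_le)
qed

lemma sqnorm_nonneg: "u \<in> Delta \<Longrightarrow> 0 \<le> sqnorm u"
  unfolding sqnorm_def using Delta_bounds(3) by (intro suminf_nonneg) auto

lemma summable_bounded_by_sqnorm:
  fixes f :: "real \<Rightarrow> real"
  assumes "u \<in> Delta" and bound: "\<And>v. 0 \<le> v \<Longrightarrow> v \<le> 1 \<Longrightarrow> \<bar>f v\<bar> \<le> K * v\<^sup>2"
  shows "summable (\<lambda>i. f (u i))" "\<bar>\<Sum>i. f (u i)\<bar> \<le> K * sqnorm u"
proof -
  have "summable (\<lambda>i. K * (u i)\<^sup>2)"
    using Delta_bounds(3)[OF assms(1)] by (rule summable_mult)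
  have bound_i: "\<bar>f (u i)\<bar> \<le> K * (u i)\<^sup>2" for i
    using bound Delta_bounds(1,2)[OF assms(1)] by blast
  then have abs_summable: "summable (\<lambda>i. \<bar>f (u i)\<bar>)"
    by (intro summable_comparison_test'[OF \<open>summable (\<lambda>i. K * (u i)\<^sup>2)\<close>]) simp
  then show "summable (\<lambda>i. f (u i))"
    by (rule summable_rabs_cancel)
  have "\<bar>\<Sum>i. f (u i)\<bar> \<le> (\<Sum>i. \<bar>f (u i)\<bar>)"
    using abs_summable by (rule summable_rabs)
  also have "\<dots> \<le> (\<Sum>i. K * (u i)\<^sup>2)"
    using abs_summable \<open>summable (\<lambda>i. K * (u i)\<^sup>2)\<close> bound_i by (intro suminf_le) auto
  also have "\<dots> = K * sqnorm u"
    unfolding sqnorm_def using Delta_bounds(3)[OF assms(1)] by (rule suminf_mult)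
  finally show "\<bar>\<Sum>i. f (u i)\<bar> \<le> K * sqnorm u" .
qed

text \<open>The integrand of \<open>\<nu>\<close> rewritten as an integrand of \<open>\<Xi>\<close>; at \<open>u = 0\<close> it is \<open>0\<close> because
  division by zero yields zero in HOL.\<close>
definition normalized_series :: "(real \<Rightarrow> real \<Rightarrow> real) \<Rightarrow> (nat \<Rightarrow> real) \<Rightarrow> real \<Rightarrow> real" where
  "normalized_series f u x = (\<Sum>i. f (u i) x) / sqnorm u"

lemma normalized_series_bounded:
  assumes "sq_bounded_on f Y"
  shows "\<exists>K. \<forall>u\<in>Delta. \<forall>y\<in>Y. \<bar>normalized_series f u y\<bar> \<le> K"
proof -
  obtain K where "K \<ge> 0" and K: "\<And>v y. v \<in> {0..1} \<Longrightarrow> y \<in> Y \<Longrightarrow> \<bar>f v y\<bar> \<le> K * v\<^sup>2"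
    using assms unfolding sq_bounded_on_def by auto
  have "\<bar>normalized_series f u y\<bar> \<le> K" if "u \<in> Delta" "y \<in> Y" for u y
  proof -
    have "\<bar>\<Sum>i. f (u i) y\<bar> \<le> K * sqnorm u"
      using K that by (intro summable_bounded_by_sqnorm(2)) auto
    then show ?thesis
      using sqnorm_nonneg[OF \<open>u \<in> Delta\<close>] \<open>K \<ge> 0\<close>
      by (cases "sqnorm u = 0") (auto simp: normalized_series_def abs_divide divide_le_eq)
  qed
  then show ?thesis
    by blast
qed

lemma has_real_derivative_normalized_series:
  assumes "u \<in> Delta" "x > 0"
    and deriv: "\<And>v y. 0 \<le> v \<Longrightarrow> v \<le> 1 \<Longrightarrow> y > 0 \<Longrightarrow> (f v has_real_derivative f' v y) (at y)"
    and "\<And>a b. 0 < a \<Longrightarrow> sq_bounded_on f {a..b}" "\<And>a b. 0 < a \<Longrightarrow> sq_bounded_on f' {a..b}"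
  shows "(normalized_series f u has_real_derivative normalized_series f' u x) (at x)"
proof -
  define S where "S = {x / 2..2 * x}"
  have "sq_bounded_on f' S"
    using assms(5) \<open>x > 0\<close> by (simp add: S_def)
  then obtain K where K: "\<And>v y. v \<in> {0..1} \<Longrightarrow> y \<in> S \<Longrightarrow> \<bar>f' v y\<bar> \<le> K * v\<^sup>2"
    unfolding sq_bounded_on_def by blast
  have "((\<lambda>y. \<Sum>i. f (u i) y) has_real_derivative (\<Sum>i. f' (u i) x)) (at x)"
  proof (rule has_field_derivative_series'(2)[where S = S and x0 = x])
    show "(f (u i) has_field_derivative f' (u i) y) (at y within S)" if "y \<in> S" for i y
      using that \<open>x > 0\<close> Delta_bounds[OF \<open>u \<in> Delta\<close>]
      by (intro has_field_derivative_at_within[OF deriv]) (auto simp: S_def)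
    show "uniformly_convergent_on S (\<lambda>n y. \<Sum>i<n. f' (u i) y)"
      using K Delta_bounds[OF \<open>u \<in> Delta\<close>]
      by (intro Weierstrass_m_test'[OF _ summable_mult[OF Delta_bounds(3)[OF \<open>u \<in> Delta\<close>]]]) auto
    obtain K0 where "\<And>v. v \<in> {0..1} \<Longrightarrow> \<bar>f v x\<bar> \<le> K0 * v\<^sup>2"
      using assms(4)[of x x, OF \<open>x > 0\<close>] unfolding sq_bounded_on_def by fastforce
    then show "summable (\<lambda>i. f (u i) x)"
      using \<open>u \<in> Delta\<close> by (intro summable_bounded_by_sqnorm(1)[where K = K0]) auto
    show "convex S" "x \<in> S" "x \<in> interior S"
      using \<open>x > 0\<close> by (simp_all add: S_def)
  qed
  then show ?thesis
    unfolding normalized_series_def[abs_def] by (rule DERIV_cdivide)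
qed

lemma measurable_normalized_series:
  assumes "sets M = Delta_sets" "(\<lambda>v. f v x) \<in> borel_measurable borel"
  shows "(\<lambda>u. normalized_series f u x) \<in> borel_measurable M"
proof -
  define R where "R = restrict_space (Pi\<^sub>M UNIV (\<lambda>_. borel :: real measure)) Delta"
  have same_sets: "measurable M borel = measurable R (borel :: real measure)"
    by (rule measurable_cong_sets) (simp_all add: assms(1) Delta_sets_def R_def)
  have component: "(\<lambda>u. u i) \<in> borel_measurable R" for i :: nat
    unfolding R_def by (intro measurable_restrict_space1 measurable_component_singleton) auto
  have "(\<lambda>u. \<Sum>i. f (u i) x) \<in> borel_measurable R"
    using measurable_compose[OF component assms(2)] by (intro borel_measurable_suminf)
  moreover have "sqnorm \<in> borel_measurable R"
    unfolding sqnorm_def[abs_def] by (intro borel_measurable_suminf borel_measurable_power component)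
  ultimately have "(\<lambda>u. (\<Sum>i. f (u i) x) / sqnorm u) \<in> borel_measurable R"
    by (rule borel_measurable_divide)
  then show ?thesis
    unfolding normalized_series_def same_sets .
qed

lemma tendsto_integral_difference_quotients:
  fixes F F' :: "'a \<Rightarrow> real \<Rightarrow> real" and X :: "nat \<Rightarrow> real"
  assumes "finite_measure M" "t \<in> S"
    and X: "\<forall>i. X i \<in> S - {t}" "X \<longlonglongrightarrow> t"
    and deriv: "\<And>u. u \<in> space M \<Longrightarrow> (F u has_real_derivative F' u t) (at t)"
    and Lipschitz: "\<And>u s. u \<in> space M \<Longrightarrow> s \<in> S \<Longrightarrow> \<bar>F u s - F u t\<bar> \<le> K * \<bar>s - t\<bar>"
    and meas: "\<And>s. s \<in> S \<Longrightarrow> (\<lambda>u. F u s) \<in> borel_measurable M"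
      "(\<lambda>u. F' u t) \<in> borel_measurable M"
    and integrable: "\<And>s. s \<in> S \<Longrightarrow> integrable M (\<lambda>u. F u s)"
  shows "(\<lambda>i. ((\<integral>u. F u (X i) \<partial>M) - (\<integral>u. F u t \<partial>M)) / (X i - t)) \<longlonglongrightarrow> (\<integral>u. F' u t \<partial>M)"
proof -
  define q where "q u s = (F u s - F u t) / (s - t)" for u s
  have "(\<lambda>i. \<integral>u. q u (X i) \<partial>M) \<longlonglongrightarrow> (\<integral>u. F' u t \<partial>M)"
  proof (rule integral_dominated_convergence[where w = "\<lambda>_. K"])
    show "AE u in M. (\<lambda>i. q u (X i)) \<longlonglongrightarrow> F' u t"
    proof (rule AE_I2)
      fix u assume "u \<in> space M"
      have "filterlim X (at t) sequentially"
        using X by (auto simp: filterlim_at)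
      with deriv[OF \<open>u \<in> space M\<close>] show "(\<lambda>i. q u (X i)) \<longlonglongrightarrow> F' u t"
        unfolding q_def has_field_derivative_iff by (rule filterlim_compose)
    qed
    show "AE u in M. norm (q u (X i)) \<le> K" for i
    proof (rule AE_I2)
      fix u assume "u \<in> space M"
      have "X i \<in> S" "X i \<noteq> t"
        using X(1) by auto
      then show "norm (q u (X i)) \<le> K"
        using Lipschitz[OF \<open>u \<in> space M\<close>, of "X i"] by (simp add: q_def pos_divide_le_eq)
    qed
    show "(\<lambda>u. q u (X i)) \<in> borel_measurable M" for i
      unfolding q_def using X(1) assms(2) by (intro borel_measurable_divide borel_measurable_diff meas) auto
  qed (simp_all add: meas(2) finite_measure.integrable_const[OF assms(1)])
  moreover have "(\<integral>u. q u (X i) \<partial>M) = ((\<integral>u. F u (X i) \<partial>M) - (\<integral>u. F u t \<partial>M)) / (X i - t)" for i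
  proof -
    have "(\<integral>u. q u (X i) \<partial>M) = (\<integral>u. F u (X i) - F u t \<partial>M) / (X i - t)"
      unfolding q_def by (rule integral_divide_zero)
    also have "\<dots> = ((\<integral>u. F u (X i) \<partial>M) - (\<integral>u. F u t \<partial>M)) / (X i - t)"
      using X(1) assms(2) by (subst Bochner_Integration.integral_diff) (auto intro: integrable)
    finally show ?thesis .
  qed
  ultimately show ?thesis
    by simp
qed

lemma has_real_derivative_integral:
  fixes F F' :: "'a \<Rightarrow> real \<Rightarrow> real"
  assumes "finite_measure M" "t \<in> {a<..<b}"
    and deriv: "\<And>u s. u \<in> space M \<Longrightarrow> s \<in> {a<..<b} \<Longrightarrow> (F u has_real_derivative F' u s) (at s)"
    and bound: "\<And>u s. u \<in> space M \<Longrightarrow> s \<in> {a<..<b} \<Longrightarrow> \<bar>F' u s\<bar> \<le> K"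
    and meas: "\<And>s. s \<in> {a<..<b} \<Longrightarrow> (\<lambda>u. F u s) \<in> borel_measurable M"
      "(\<lambda>u. F' u t) \<in> borel_measurable M"
    and integrable: "\<And>s. s \<in> {a<..<b} \<Longrightarrow> integrable M (\<lambda>u. F u s)"
  shows "((\<lambda>s. \<integral>u. F u s \<partial>M) has_real_derivative (\<integral>u. F' u t \<partial>M)) (at t)"
proof -
  have Lipschitz: "\<bar>F u s - F u t\<bar> \<le> K * \<bar>s - t\<bar>" if "u \<in> space M" "s \<in> {a<..<b}" for u s
  proof -
    have "norm (F u s - F u t) \<le> K * norm (s - t)"
    proof (rule field_differentiable_bound[of "{a<..<b}"])
      fix z assume "z \<in> {a<..<b}"
      then show "(F u has_field_derivative F' u z) (at z within {a<..<b})" "norm (F' u z) \<le> K"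
        using that by (auto intro: has_field_derivative_at_within[OF deriv] bound)
    qed (use that assms(2) in auto)
    then show ?thesis
      by simp
  qed
  have "at t within {a<..<b} = at t"
    using assms(2) by (intro at_within_open) auto
  have "((\<lambda>s. ((\<integral>u. F u s \<partial>M) - (\<integral>u. F u t \<partial>M)) / (s - t)) \<longlongrightarrow> (\<integral>u. F' u t \<partial>M)) (at t)"
    unfolding \<open>at t within {a<..<b} = at t\<close>[symmetric] tendsto_at_iff_sequentially comp_def
  proof (intro allI impI)
    fix X :: "nat \<Rightarrow> real" assume X: "\<forall>i. X i \<in> {a<..<b} - {t}" "X \<longlonglongrightarrow> t"
    show "(\<lambda>i. ((\<integral>u. F u (X i) \<partial>M) - (\<integral>u. F u t \<partial>M)) / (X i - t)) \<longlonglongrightarrow> (\<integral>u. F' u t \<partial>M)"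
      by (rule tendsto_integral_difference_quotients[where F = F and F' = F',
            OF assms(1,2) X deriv[OF _ assms(2)] Lipschitz meas integrable])
  qed
  then show ?thesis
    unfolding has_field_derivative_iff .
qed

lemma borel_measurable_psi:
  "(\<lambda>v. psi v x) \<in> borel_measurable borel" "(\<lambda>v. psi' v x) \<in> borel_measurable borel"
  "(\<lambda>v. psi'' v x) \<in> borel_measurable borel"
  unfolding psi_def psi'_def psi''_def pow0_def by measurable

lemma summable_psi'':
  assumes "u \<in> Delta" "0 < y"
  shows "summable (\<lambda>i. psi'' (u i) y)"
proof -
  obtain K where "\<And>v. v \<in> {0..1} \<Longrightarrow> \<bar>psi'' v y\<bar> \<le> K * v\<^sup>2"
    using sq_bounded_on_psi''[OF \<open>0 < y\<close>, of y] unfolding sq_bounded_on_def by fastforce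
  then show ?thesis
    using \<open>u \<in> Delta\<close> by (intro summable_bounded_by_sqnorm(1)[where K = K]) auto
qed

lemma normalized_series_psi''_nonneg:
  assumes "u \<in> Delta" "0 < y"
  shows "0 \<le> normalized_series psi'' u y"
  unfolding normalized_series_def
  by (intro divide_nonneg_nonneg suminf_nonneg summable_psi'' sqnorm_nonneg assms) (simp add: psi''_def)

definition gamma' :: "(nat \<Rightarrow> real) measure \<Rightarrow> real \<Rightarrow> real" where
  "gamma' Xi x = measure Xi {zero_seq} * (2 * x - 1) / 2 + (\<integral>u. normalized_series psi' u x \<partial>Xi)"

definition gamma'' :: "(nat \<Rightarrow> real) measure \<Rightarrow> real \<Rightarrow> real" where
  "gamma'' Xi x = measure Xi {zero_seq} + (\<integral>u. normalized_series psi'' u x \<partial>Xi)"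

context
  fixes Xi :: "(nat \<Rightarrow> real) measure"
  assumes finite: "finite_measure Xi" and space: "space Xi = Delta" and sets: "sets Xi = Delta_sets"
begin

lemma integrable_normalized_series:
  assumes "sq_bounded_on f {y}" "(\<lambda>v. f v y) \<in> borel_measurable borel"
  shows "integrable Xi (\<lambda>u. normalized_series f u y)"
proof -
  obtain K where K: "\<forall>u\<in>Delta. \<forall>z\<in>{y}. \<bar>normalized_series f u z\<bar> \<le> K"
    using normalized_series_bounded[OF assms(1)] ..
  show ?thesis
  proof (rule finite_measure.integrable_const_bound[OF finite, where B = K])
    show "AE u in Xi. norm (normalized_series f u y) \<le> K"
      using K space by (intro AE_I2) simp
  qed (rule measurable_normalized_series[where f = f and x = y, OF sets assms(2)])
qed

lemma has_real_derivative_integral_normalized_series: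
  assumes "x > 0"
    and deriv: "\<And>v y. 0 \<le> v \<Longrightarrow> v \<le> 1 \<Longrightarrow> y > 0 \<Longrightarrow> (f v has_real_derivative f' v y) (at y)"
    and bounded: "\<And>a b. 0 < a \<Longrightarrow> sq_bounded_on f {a..b}" "\<And>a b. 0 < a \<Longrightarrow> sq_bounded_on f' {a..b}"
    and meas: "\<And>y. (\<lambda>v. f v y) \<in> borel_measurable borel" "\<And>y. (\<lambda>v. f' v y) \<in> borel_measurable borel"
  shows "((\<lambda>y. \<integral>u. normalized_series f u y \<partial>Xi) has_real_derivative
      (\<integral>u. normalized_series f' u x \<partial>Xi)) (at x)"
proof -
  obtain K where K: "\<forall>u\<in>Delta. \<forall>y\<in>{x / 2..2 * x}. \<bar>normalized_series f' u y\<bar> \<le> K"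
    using normalized_series_bounded[OF bounded(2)[of "x / 2" "2 * x"]] \<open>x > 0\<close> by auto
  have bounded_at: "sq_bounded_on f {y}" if "y > 0" for y
    using sq_bounded_on_subset[OF bounded(1)[OF that, of y]] by simp
  show ?thesis
  proof (rule has_real_derivative_integral[OF finite, where a = "x / 2" and b = "2 * x" and K = K])
    show "x \<in> {x / 2<..<2 * x}"
      using \<open>x > 0\<close> by simp
    fix s assume s: "s \<in> {x / 2<..<2 * x}"
    then have "s > 0"
      using \<open>x > 0\<close> by simp
    show "(normalized_series f u has_real_derivative normalized_series f' u s) (at s)"
      if "u \<in> space Xi" for u
      using that \<open>s > 0\<close> space by (intro has_real_derivative_normalized_series deriv bounded) auto
    show "\<bar>normalized_series f' u s\<bar> \<le> K" if "u \<in> space Xi" for u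
      using that s space K by auto
    show "(\<lambda>u. normalized_series f u s) \<in> borel_measurable Xi"
      by (rule measurable_normalized_series[where f = f, OF sets meas(1)])
    show "integrable Xi (\<lambda>u. normalized_series f u s)"
      by (rule integrable_normalized_series[OF bounded_at[OF \<open>s > 0\<close>] meas(1)])
  qed (rule measurable_normalized_series[where f = f', OF sets meas(2)])
qed

lemma gamma_eq_integral:
  "gamma Xi x = measure Xi {zero_seq} * (x * (x - 1) / 2) + (\<integral>u. normalized_series psi u x \<partial>Xi)"
proof -
  have "indicator (Delta - {zero_seq}) u * ((\<Sum>i. pow0 (1 - u i) x - 1 + x * u i) / sqnorm u)
      = normalized_series psi u x" if "u \<in> space Xi" for u
    using that space by (cases "u = zero_seq") (auto simp: normalized_series_def psi_def sqnorm_def zero_seq_def)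
  then show ?thesis
    unfolding gamma_def set_lebesgue_integral_def by (simp cong: Bochner_Integration.integral_cong)
qed

lemma has_real_derivative_gamma:
  assumes "x > 0"
  shows "(gamma Xi has_real_derivative gamma' Xi x) (at x)"
proof -
  have "((\<lambda>y. measure Xi {zero_seq} * (y * (y - 1) / 2)) has_real_derivative
      measure Xi {zero_seq} * (2 * x - 1) / 2) (at x)"
    by (auto intro!: derivative_eq_intros simp: field_simps)
  moreover have "((\<lambda>y. \<integral>u. normalized_series psi u y \<partial>Xi) has_real_derivative
      (\<integral>u. normalized_series psi' u x \<partial>Xi)) (at x)"
    using assms by (intro has_real_derivative_integral_normalized_series has_real_derivative_psi
        sq_bounded_on_psi sq_bounded_on_psi' borel_measurable_psi)
  ultimately show ?thesis
    unfolding gamma_eq_integral[abs_def] gamma'_def by (rule DERIV_add)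
qed

lemma has_real_derivative_gamma':
  assumes "x > 0"
  shows "(gamma' Xi has_real_derivative gamma'' Xi x) (at x)"
proof -
  have "((\<lambda>y. measure Xi {zero_seq} * (2 * y - 1) / 2) has_real_derivative measure Xi {zero_seq}) (at x)"
    by (auto intro!: derivative_eq_intros)
  moreover have "((\<lambda>y. \<integral>u. normalized_series psi' u y \<partial>Xi) has_real_derivative
      (\<integral>u. normalized_series psi'' u x \<partial>Xi)) (at x)"
    using assms by (intro has_real_derivative_integral_normalized_series has_real_derivative_psi'
        sq_bounded_on_psi' sq_bounded_on_psi'' borel_measurable_psi)
  ultimately show ?thesis
    unfolding gamma'_def[abs_def] gamma''_def by (rule DERIV_add)
qed

lemma gamma''_nonneg: "x > 0 \<Longrightarrow> 0 \<le> gamma'' Xi x"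
  unfolding gamma''_def using space
  by (intro add_nonneg_nonneg integral_nonneg_AE AE_I2 normalized_series_psi''_nonneg) auto

lemma gamma''_antimono:
  assumes "0 < x" "x \<le> y"
  shows "gamma'' Xi y \<le> gamma'' Xi x"
proof -
  have "normalized_series psi'' u y \<le> normalized_series psi'' u x" if "u \<in> Delta" for u
  proof -
    have "psi'' v y \<le> psi'' v x" if "0 \<le> v" "v \<le> 1" for v
      unfolding psi''_def using that assms by (intro mult_right_mono powr_mono') auto
    then have "(\<Sum>i. psi'' (u i) y) \<le> (\<Sum>i. psi'' (u i) x)"
      using Delta_bounds[OF \<open>u \<in> Delta\<close>] assms by (intro suminf_le summable_psi'' \<open>u \<in> Delta\<close>) auto
    then show ?thesis
      unfolding normalized_series_def using sqnorm_nonneg[OF \<open>u \<in> Delta\<close>] by (rule divide_right_mono)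
  qed
  moreover have "integrable Xi (\<lambda>u. normalized_series psi'' u z)" if "z > 0" for z
    using that
    by (intro integrable_normalized_series[OF sq_bounded_on_subset[OF sq_bounded_on_psi'']] borel_measurable_psi)
      auto
  ultimately have "(\<integral>u. normalized_series psi'' u y \<partial>Xi) \<le> (\<integral>u. normalized_series psi'' u x \<partial>Xi)"
    using assms space by (intro integral_mono) auto
  then show ?thesis
    unfolding gamma''_def by simp
qed

lemma gamma_convex_with_antitone_second_derivative:
  "convex_with_antitone_second_derivative (gamma Xi) (gamma' Xi) (gamma'' Xi)"
  by unfold_locales
    (blast intro: has_real_derivative_gamma has_real_derivative_gamma' gamma''_nonneg gamma''_antimono)+

end

theorem mainTheorem2:
  fixes Xi :: "(nat \<Rightarrow> real) measure" and \<kappa> :: real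
  assumes "finite_measure Xi"
    and "space Xi = Delta"
    and "sets Xi = Delta_sets"
    and "0 \<le> \<kappa>"
  defines "g \<equiv> gamma Xi"
  shows "(((\<lambda>x. x * deriv (deriv g) x) \<longlongrightarrow> \<kappa>) at_top
           \<longleftrightarrow> ((\<lambda>x. deriv g x - g x / x) \<longlongrightarrow> \<kappa>) at_top)
       \<and> (((\<lambda>x. deriv g x - g x / x) \<longlongrightarrow> \<kappa>) at_top
           \<longleftrightarrow> (\<exists>L. slowly_varying L \<and> (\<forall>x>0. g x / x = \<kappa> * ln x + ln (L x))))
       \<and> ((\<exists>L. slowly_varying L \<and> (\<forall>x>0. g x / x = \<kappa> * ln x + ln (L x)))
           \<longleftrightarrow> (\<forall>y>0. ((\<lambda>x. g (y * x) / (y * x) - g x / x) \<longlongrightarrow> \<kappa> * ln y) at_top))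
       \<and> ((\<forall>y>0. ((\<lambda>x. g (y * x) / (y * x) - g x / x) \<longlongrightarrow> \<kappa> * ln y) at_top)
           \<longleftrightarrow> (\<forall>y>0. ((\<lambda>x. deriv g (y * x) - deriv g x) \<longlongrightarrow> \<kappa> * ln y) at_top))"
proof -
  interpret convex_with_antitone_second_derivative "gamma Xi" "gamma' Xi" "gamma'' Xi"
    using assms(1-3) by (rule gamma_convex_with_antitone_second_derivative)
  show ?thesis
    unfolding g_def using assms(4) by (rule limit_conditions_equivalent_deriv)
qed

end
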